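(* Let $a,b,c\in\mathbb{R}$ with $b\neq 0$ and write $-a/b=2n+3$. Any linear Hopf sphere $\mathcal{S}$ satisfying $0=ar_1+br_2+c$ has astigmatism of the form $s=C_0\sin^{2n+2}\theta$ and support function of the form $$r=C_2\cos\theta+C_1+C_0\left[\frac{\sin^{2n+2}\theta}{2n+2}-\cos\theta\int_0^\theta\sin^{2n+1}\vartheta\,d\vartheta\right],$$ for constants $C_0,C_1,C_2$.
   Context: $\mathscr{W}$ is the set of embedded $C^2$-smooth topological 2-spheres in $\mathbb{R}^3$ that are rotationally symmetric and strictly convex. A surface in $\mathscr{W}$ is parametrised by the inverse Gauss map with $\theta\in[0,\pi]$ the angle between the outward normal and the symmetry axis. The support function is $r(\theta)=\vec X\cdot\hat n$, the radii of curvature are $r_1=\frac{\cos^2\theta}{\sin\theta}\frac{d}{d\theta}\left(\frac{r}{\cos\theta}\right)$, $r_2=r''+r$, and the astigmatism is $s=r_2-r_1$. A linear Hopf sphere (for $a,b,c$) is a surface in $\mathscr{W}$ on which $ar_1+br_2+c=0$ holds identically. *)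

theory Defs
  imports "HOL-Analysis.Analysis"
begin

text \<open>A rotationally symmetric strictly convex sphere is described through its
support function r(theta), theta in [0,pi] the angle between the outward normal
and the symmetry axis.  As a function of theta the support function of a
C2 surface with positive curvature is C2 (on all of the real line, by evenness
and periodicity).\<close>

text \<open>Radius of curvature r1 = cos^2/sin * d/dtheta (r / cos), written in the
equivalent form r' cos/sin + r (this is what the paper's formula unfolds to, and
it is also meaningful at theta = pi/2, where r/cos is not defined).\<close>
definition radius1 :: "(real \<Rightarrow> real) \<Rightarrow> real \<Rightarrow> real" where
  "radius1 r \<theta> = deriv r \<theta> * cos \<theta> / sin \<theta> + r \<theta>"

definition radius2 :: "(real \<Rightarrow> real) \<Rightarrow> real \<Rightarrow> real" where
  "radius2 r \<theta> = deriv (deriv r) \<theta> + r \<theta>"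

definition astigmatism :: "(real \<Rightarrow> real) \<Rightarrow> real \<Rightarrow> real" where
  "astigmatism r \<theta> = radius2 r \<theta> - radius1 r \<theta>"

definition in_W :: "(real \<Rightarrow> real) \<Rightarrow> bool" where
  "in_W r \<longleftrightarrow>
     (\<forall>x. (r has_real_derivative deriv r x) (at x)) \<and>
     (\<forall>x. (deriv r has_real_derivative deriv (deriv r) x) (at x)) \<and>
     continuous_on UNIV (deriv (deriv r)) \<and>
     deriv r 0 = 0 \<and> deriv r pi = 0 \<and>
     (\<forall>\<theta>\<in>{0..pi}. radius2 r \<theta> > 0) \<and>
     (\<forall>\<theta>\<in>{0<..<pi}. radius1 r \<theta> > 0)"

definition linear_hopf_sphere :: "real \<Rightarrow> real \<Rightarrow> real \<Rightarrow> (real \<Rightarrow> real) \<Rightarrow> bool" where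
  "linear_hopf_sphere a b c r \<longleftrightarrow> in_W r \<and>
     (\<forall>\<theta>\<in>{0<..<pi}. a * radius1 r \<theta> + b * radius2 r \<theta> + c = 0)"

end

theory Submission
  imports Defs
begin

text \<open>Write m = -a/b - 1 = 2n + 2.  Differentiating r1 = r' cot + r gives the Codazzi-type
identity r1' = cot s, and the linear relation turns into s = m r1 - c/b; hence s' = m cot s,
whose solutions are the multiples of sin^m.  Then (r'/sin)' = s/sin = C0 sin^(m-1), so
r'/sin - C0 \<integral>sin^(m-1) is constant, and r + cos (r'/sin) - C0 sin^m/m has derivative zero.
Smoothness at the poles (r'(0) = r'(pi) = 0) makes r'/sin continuous on [0,pi], with value r''(0)
at 0; it also forces s \<rightarrow> 0 at 0, so either C0 = 0 or m > 0, which is what makes sin^m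
continuous at the poles.\<close>

lemma tendsto_divide_at_common_root:
  fixes f g :: "real \<Rightarrow> real"
  assumes "(f has_real_derivative f') (at x)" "(g has_real_derivative g') (at x)"
    and "f x = 0" "g x = 0" "g' \<noteq> 0"
  shows "((\<lambda>y. f y / g y) \<longlongrightarrow> f' / g') (at x)"
proof -
  have "((\<lambda>y. ((f y - f x) / (y - x)) / ((g y - g x) / (y - x))) \<longlongrightarrow> f' / g') (at x)"
    using assms(1,2,5) by (intro tendsto_divide) (simp_all add: has_field_derivative_iff)
  moreover have "\<forall>\<^sub>F y in at x. ((f y - f x) / (y - x)) / ((g y - g x) / (y - x)) = f y / g y"
    unfolding eventually_at_filter using assms(3,4) by (auto intro!: always_eventually)
  ultimately show ?thesis
    by (rule Lim_transform_eventually)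
qed

lemma sin_powr_if_deriv_eq_cot_mult:
  fixes f :: "real \<Rightarrow> real"
  assumes "\<And>x. x \<in> {0<..<pi} \<Longrightarrow> (f has_real_derivative m * (cos x / sin x) * f x) (at x)"
  obtains C where "\<And>x. x \<in> {0<..<pi} \<Longrightarrow> f x = C * sin x powr m"
proof -
  define Q where "Q x = f x * sin x powr (- m)" for x
  have "(Q has_real_derivative 0) (at x within {0<..<pi})" if x: "x \<in> {0<..<pi}" for x
  proof -
    have sin_pos: "sin x > 0"
      using x by (auto intro: sin_gt_zero)
    have "(Q has_real_derivative m * (cos x / sin x) * f x * sin x powr (- m)
        + (- m * sin x powr (- m - real 1) * cos x) * f x) (at x)"
      unfolding Q_def by (rule DERIV_mult[OF assms[OF x] DERIV_fun_powr[OF DERIV_sin sin_pos]])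
    moreover have "m * (cos x / sin x) * f x * sin x powr (- m)
        + (- m * sin x powr (- m - real 1) * cos x) * f x = 0"
      using sin_pos by (simp add: powr_diff field_simps)
    ultimately show ?thesis
      by (auto intro: has_field_derivative_at_within)
  qed
  then obtain C where "\<And>x. x \<in> {0<..<pi} \<Longrightarrow> Q x = C"
    using has_field_derivative_zero_constant[of "{0<..<pi}" Q] by auto
  moreover have "f x = Q x * sin x powr m" if "x \<in> {0<..<pi}" for x
    using that sin_gt_zero[of x] by (simp add: Q_def mult.assoc powr_add[symmetric])
  ultimately show ?thesis
    using that by auto
qed

lemma astigmatism_eq:
  "astigmatism r x = deriv (deriv r) x - deriv r x / sin x * cos x"
  by (simp add: astigmatism_def radius1_def radius2_def)

lemma radius1_has_real_derivative:
  assumes r': "\<And>x. (r has_real_derivative deriv r x) (at x)"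
    and r'': "\<And>x. (deriv r has_real_derivative deriv (deriv r) x) (at x)"
    and "sin x \<noteq> 0"
  shows "(radius1 r has_real_derivative cos x / sin x * astigmatism r x) (at x)"
proof -
  have "(radius1 r has_real_derivative
      ((deriv (deriv r) x * cos x - deriv r x * sin x) * sin x - deriv r x * cos x * cos x)
        / (sin x * sin x) + deriv r x) (at x)"
    unfolding radius1_def[abs_def] using assms by (auto intro!: derivative_eq_intros)
  moreover have "cos x * cos x = 1 - sin x * sin x"
    using sin_squared_eq[of x] by (simp add: power2_eq_square)
  ultimately show ?thesis
    using \<open>sin x \<noteq> 0\<close> by (simp add: astigmatism_eq field_simps)
qed

lemma linear_hopf_astigmatism_eq:
  assumes "linear_hopf_sphere a b c r" "b \<noteq> 0" "x \<in> {0<..<pi}"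
  shows "astigmatism r x = (- a / b - 1) * radius1 r x - c / b"
proof -
  have "a * radius1 r x + b * radius2 r x + c = 0"
    using assms(1,3) by (simp add: linear_hopf_sphere_def)
  then have "radius2 r x = (- a * radius1 r x - c) / b"
    using \<open>b \<noteq> 0\<close> by (simp add: eq_divide_eq algebra_simps)
  then show ?thesis
    using \<open>b \<noteq> 0\<close> by (simp add: astigmatism_def algebra_simps diff_divide_distrib)
qed

lemma linear_hopf_astigmatism_sin_powr:
  assumes hopf: "linear_hopf_sphere a b c r" and "b \<noteq> 0"
  obtains C where "\<And>x. x \<in> {0<..<pi} \<Longrightarrow> astigmatism r x = C * sin x powr (- a / b - 1)"
proof -
  have "(astigmatism r has_real_derivative (- a / b - 1) * (cos x / sin x) * astigmatism r x) (at x)"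
    if x: "x \<in> {0<..<pi}" for x
  proof -
    have "in_W r"
      using hopf by (simp add: linear_hopf_sphere_def)
    then have "(radius1 r has_real_derivative cos x / sin x * astigmatism r x) (at x)"
      using x sin_gt_zero[of x] by (intro radius1_has_real_derivative) (auto simp: in_W_def)
    then have "((\<lambda>y. (- a / b - 1) * radius1 r y - c / b) has_real_derivative
        (- a / b - 1) * (cos x / sin x) * astigmatism r x) (at x)"
      by (auto intro!: derivative_eq_intros)
    then show ?thesis
      by (rule has_field_derivative_transform_within_open[where S = "{0<..<pi}"])
        (use x linear_hopf_astigmatism_eq[OF hopf \<open>b \<noteq> 0\<close>] in auto)
  qed
  then show ?thesis
    using that by (rule sin_powr_if_deriv_eq_cot_mult)
qed

lemma astigmatism_tendsto_0_at_0:
  assumes r'': "\<And>x. (deriv r has_real_derivative deriv (deriv r) x) (at x)"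
    and "deriv r 0 = 0" "isCont (deriv (deriv r)) 0"
  shows "(astigmatism r \<longlongrightarrow> 0) (at 0)"
proof -
  have "((\<lambda>y. deriv r y / sin y) \<longlongrightarrow> deriv (deriv r) 0) (at 0)"
    using tendsto_divide_at_common_root[OF r'' DERIV_sin, of 0] \<open>deriv r 0 = 0\<close> by simp
  then have "((\<lambda>y. deriv (deriv r) y - deriv r y / sin y * cos y) \<longlongrightarrow>
      deriv (deriv r) 0 - deriv (deriv r) 0 * cos 0) (at 0)"
    using \<open>isCont (deriv (deriv r)) 0\<close> by (intro tendsto_intros) (simp_all add: isCont_def)
  then show ?thesis
    by (simp add: astigmatism_eq[abs_def])
qed

lemma pos_if_mult_sin_powr_tendsto_0:
  fixes C m :: real
  assumes lim: "((\<lambda>x. C * sin x powr m) \<longlongrightarrow> 0) (at_right 0)" and "C \<noteq> 0"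
  shows "m > 0"
proof (rule ccontr)
  assume "\<not> m > 0"
  have "\<bar>C\<bar> \<le> \<bar>C * sin x powr m\<bar>" if x: "x \<in> {0<..<pi}" for x
  proof -
    have "1 powr m \<le> sin x powr m"
      using \<open>\<not> m > 0\<close> x sin_gt_zero[of x] sin_le_one[of x] by (intro powr_mono2') auto
    then show ?thesis
      by (simp add: abs_mult mult_le_cancel_left1)
  qed
  then have "\<forall>\<^sub>F x in at_right 0. \<bar>C\<bar> \<le> \<bar>C * sin x powr m\<bar>"
    by (intro eventually_at_rightI[of 0 pi]) auto
  with tendsto_rabs[OF lim] have "\<bar>C\<bar> \<le> 0"
    using tendsto_lowerbound trivial_limit_at_right_real by fastforce
  with \<open>C \<noteq> 0\<close> show False
    by simp
qed

lemma astigmatism_sin_powr_coeff_eq_0_or_pos: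
  assumes r'': "\<And>x. (deriv r has_real_derivative deriv (deriv r) x) (at x)"
    and "deriv r 0 = 0" "isCont (deriv (deriv r)) 0"
    and s: "\<And>x. x \<in> {0<..<pi} \<Longrightarrow> astigmatism r x = C * sin x powr m"
  shows "C = 0 \<or> m > 0"
proof -
  have "(astigmatism r \<longlongrightarrow> 0) (at_right 0)"
    using tendsto_within_subset[OF astigmatism_tendsto_0_at_0[OF assms(1-3)]] by simp
  moreover have "\<forall>\<^sub>F x in at_right 0. astigmatism r x = C * sin x powr m"
    using s by (intro eventually_at_rightI[of 0 pi]) auto
  ultimately have "((\<lambda>x. C * sin x powr m) \<longlongrightarrow> 0) (at_right 0)"
    by (rule Lim_transform_eventually)
  then show ?thesis
    using pos_if_mult_sin_powr_tendsto_0 by blast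
qed

definition div_sin_ext :: "(real \<Rightarrow> real) \<Rightarrow> real \<Rightarrow> real" where
  "div_sin_ext u x = (if x = 0 then deriv u 0 else if x = pi then - deriv u pi else u x / sin x)"

lemma continuous_on_div_sin_ext:
  assumes u': "\<And>x. (u has_real_derivative deriv u x) (at x)" and "u 0 = 0" "u pi = 0"
  shows "continuous_on {0..pi} (div_sin_ext u)"
proof (intro continuous_at_imp_continuous_on ballI)
  fix x :: real assume x: "x \<in> {0..pi}"
  have "((\<lambda>y. u y / sin y) \<longlongrightarrow> div_sin_ext u x) (at x)"
  proof -
    consider "x = 0" | "x = pi" | "x \<in> {0<..<pi}"
      using x by fastforce
    then show ?thesis
    proof cases
      case 1
      then show ?thesis
        using tendsto_divide_at_common_root[OF u' DERIV_sin, of 0] \<open>u 0 = 0\<close>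
        by (simp add: div_sin_ext_def)
    next
      case 2
      then show ?thesis
        using tendsto_divide_at_common_root[OF u' DERIV_sin, of pi] \<open>u pi = 0\<close>
        by (simp add: div_sin_ext_def)
    next
      case 3
      then have "sin x \<noteq> 0"
        using sin_gt_zero[of x] by auto
      then have "isCont (\<lambda>y. u y / sin y) x"
        using DERIV_isCont[OF u'] by (intro continuous_intros) auto
      with 3 show ?thesis
        by (simp add: isCont_def div_sin_ext_def)
    qed
  qed
  moreover have "\<forall>\<^sub>F y in at x. u y / sin y = div_sin_ext u y"
    using eventually_conj[OF eventually_neq_at_within[of 0] eventually_neq_at_within[of pi]]
    by eventually_elim (simp add: div_sin_ext_def)
  ultimately show "isCont (div_sin_ext u) x"
    unfolding isCont_def by (rule Lim_transform_eventually)
qed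

lemma div_sin_ext_has_real_derivative:
  assumes r'': "\<And>x. (deriv r has_real_derivative deriv (deriv r) x) (at x)"
    and x: "x \<in> {0<..<pi}"
  shows "(div_sin_ext (deriv r) has_real_derivative astigmatism r x / sin x) (at x)"
proof -
  have "sin x \<noteq> 0"
    using x sin_gt_zero[of x] by auto
  then have "((\<lambda>y. deriv r y / sin y) has_real_derivative astigmatism r x / sin x) (at x)"
    by (auto intro!: derivative_eq_intros r'' simp: astigmatism_eq field_simps power2_eq_square)
  then show ?thesis
    by (rule has_field_derivative_transform_within_open[where S = "{0<..<pi}"])
      (use x in \<open>auto simp: div_sin_ext_def\<close>)
qed

lemma div_sin_ext_has_real_derivative_sin_powr:
  assumes r'': "\<And>x. (deriv r has_real_derivative deriv (deriv r) x) (at x)"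
    and s: "\<And>x. x \<in> {0<..<pi} \<Longrightarrow> astigmatism r x = C * sin x powr m"
    and x: "x \<in> {0<..<pi}"
  shows "(div_sin_ext (deriv r) has_real_derivative C * sin x powr (m - 1)) (at x)"
proof -
  have "astigmatism r x / sin x = C * sin x powr (m - 1)"
    using s[OF x] x sin_gt_zero[of x] by (simp add: powr_diff)
  then show ?thesis
    using div_sin_ext_has_real_derivative[OF r'' x] by simp
qed

text \<open>With the factor c kept outside, g need not be integrable when c = 0.\<close>
lemma eq_add_mult_integral_if_derivative:
  fixes G g :: "real \<Rightarrow> real"
  assumes "continuous_on {a..b} G"
    and "\<And>x. x \<in> {a<..<b} \<Longrightarrow> (G has_real_derivative c * g x) (at x)"
    and t: "t \<in> {a..b}"
  shows "G t = G a + c * integral {a..t} g"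
proof -
  have int: "((\<lambda>x. c * g x) has_integral G t - G a) {a..t}"
  proof (rule fundamental_theorem_of_calculus_interior)
    show "a \<le> t" "continuous_on {a..t} G"
      using t continuous_on_subset[OF assms(1)] by auto
  next
    fix x assume "x \<in> {a<..<t}"
    then show "(G has_vector_derivative c * g x) (at x)"
      using t assms(2) by (simp add: has_real_derivative_iff_has_vector_derivative)
  qed
  show ?thesis
  proof (cases "c = 0")
    case True
    then show ?thesis
      using int has_integral_unique[OF has_integral_0] by fastforce
  next
    case False
    then have "(g has_integral (G t - G a) / c) {a..t}"
      using has_integral_mult_right[OF int, of "1 / c"] by simp
    then show ?thesis
      using False by (simp add: integral_unique)
  qed
qed

lemma continuous_on_mult_sin_powr_div:
  assumes "C = 0 \<or> m > 0"
  shows "continuous_on {0..pi} (\<lambda>x. C * sin x powr m / m)"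
proof (cases "C = 0")
  case False
  with assms have "m > 0"
    by simp
  then have "continuous_on {0..pi} (\<lambda>x. sin x powr m)"
    by (intro continuous_on_powr' continuous_on_sin continuous_on_id continuous_on_const)
      (auto intro: sin_ge_zero)
  then show ?thesis
    using \<open>m > 0\<close> by (intro continuous_on_divide continuous_on_mult_left continuous_on_const) auto
qed simp

lemma mult_sin_powr_div_has_real_derivative:
  assumes "C = 0 \<or> m \<noteq> 0" and "sin x > 0"
  shows "((\<lambda>x. C * sin x powr m / m) has_real_derivative C * sin x powr (m - 1) * cos x) (at x)"
proof -
  have "((\<lambda>x. C * sin x powr m / m) has_real_derivative C * (m * sin x powr (m - real 1) * cos x) / m) (at x)"
    using \<open>sin x > 0\<close> by (intro DERIV_cdivide DERIV_cmult DERIV_fun_powr DERIV_sin)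
  then show ?thesis
    using assms(1) by (auto simp: mult.assoc)
qed

lemma support_function_if_astigmatism_sin_powr:
  assumes r': "\<And>x. (r has_real_derivative deriv r x) (at x)"
    and r'': "\<And>x. (deriv r has_real_derivative deriv (deriv r) x) (at x)"
    and poles: "deriv r 0 = 0" "deriv r pi = 0"
    and s: "\<And>x. x \<in> {0<..<pi} \<Longrightarrow> astigmatism r x = C * sin x powr m"
    and "C = 0 \<or> m > 0" and \<theta>: "\<theta> \<in> {0..pi}"
  shows "r \<theta> = - deriv (deriv r) 0 * cos \<theta> + (r 0 + deriv (deriv r) 0)
    + C * (sin \<theta> powr m / m - cos \<theta> * integral {0..\<theta>} (\<lambda>v. sin v powr (m - 1)))"
proof -
  define G where "G = div_sin_ext (deriv r)"
  define P where "P x = C * sin x powr m / m" for x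
  define K where "K x = r x + cos x * G x - P x" for x
  have G_cont: "continuous_on {0..pi} G"
    unfolding G_def using r'' poles by (rule continuous_on_div_sin_ext)
  have G': "(G has_real_derivative C * sin x powr (m - 1)) (at x)" if "x \<in> {0<..<pi}" for x
    unfolding G_def using r'' s that by (rule div_sin_ext_has_real_derivative_sin_powr)
  have P_cont: "continuous_on {0..pi} P"
    unfolding P_def[abs_def] using \<open>C = 0 \<or> m > 0\<close> by (rule continuous_on_mult_sin_powr_div)
  have P': "(P has_real_derivative C * sin x powr (m - 1) * cos x) (at x)"
    if "x \<in> {0<..<pi}" for x
    unfolding P_def[abs_def] using \<open>C = 0 \<or> m > 0\<close> that
    by (intro mult_sin_powr_div_has_real_derivative) (auto intro: sin_gt_zero)
  have "continuous_on {0..pi} r"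
    using DERIV_isCont[OF r'] by (intro continuous_at_imp_continuous_on) auto
  then have "continuous_on {0..pi} K"
    unfolding K_def using G_cont P_cont by (intro continuous_intros)
  moreover have "(K has_real_derivative 0) (at x)" if x: "x \<in> {0<..<pi}" for x
  proof -
    have "G x = deriv r x / sin x"
      using x by (simp add: G_def div_sin_ext_def)
    moreover have "sin x \<noteq> 0"
      using x sin_gt_zero[of x] by simp
    ultimately show ?thesis
      unfolding K_def[abs_def] using r' G'[OF x] P'[OF x]
      by (auto intro!: derivative_eq_intros)
  qed
  ultimately have "K \<theta> = K 0"
    using \<theta> by (intro DERIV_isconst2[of 0 pi]) auto
  moreover have "G \<theta> = deriv (deriv r) 0 + C * integral {0..\<theta>} (\<lambda>v. sin v powr (m - 1))"
    using eq_add_mult_integral_if_derivative[OF G_cont G' \<theta>] by (simp add: G_def div_sin_ext_def)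
  ultimately show ?thesis
    by (simp add: K_def P_def G_def div_sin_ext_def algebra_simps)
qed

theorem proposition3p1:
  fixes a b c n :: real and r :: "real \<Rightarrow> real"
  assumes "b \<noteq> 0" and "- a / b = 2 * n + 3"
    and "linear_hopf_sphere a b c r"
  shows "\<exists>C0 C1 C2 :: real.
    (\<forall>\<theta>\<in>{0<..<pi}. astigmatism r \<theta> = C0 * sin \<theta> powr (2 * n + 2)) \<and>
    (\<forall>\<theta>\<in>{0..pi}. r \<theta> = C2 * cos \<theta> + C1 + C0 *
        (sin \<theta> powr (2 * n + 2) / (2 * n + 2)
         - cos \<theta> * integral {0..\<theta>} (\<lambda>v. sin v powr (2 * n + 1))))"
proof -
  have "in_W r"
    using assms(3) by (simp add: linear_hopf_sphere_def)
  then have r': "\<And>x. (r has_real_derivative deriv r x) (at x)"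
    and r'': "\<And>x. (deriv r has_real_derivative deriv (deriv r) x) (at x)"
    and poles: "deriv r 0 = 0" "deriv r pi = 0"
    and "isCont (deriv (deriv r)) 0"
    by (simp_all add: in_W_def continuous_on_eq_continuous_at)
  have "- a / b - 1 = 2 * n + 2"
    using assms(2) by simp
  then obtain C0 where s: "\<And>x. x \<in> {0<..<pi} \<Longrightarrow> astigmatism r x = C0 * sin x powr (2 * n + 2)"
    using linear_hopf_astigmatism_sin_powr[OF assms(3,1)] by metis
  have "C0 = 0 \<or> 2 * n + 2 > 0"
    using r'' poles(1) \<open>isCont (deriv (deriv r)) 0\<close> s by (rule astigmatism_sin_powr_coeff_eq_0_or_pos)
  from support_function_if_astigmatism_sin_powr[OF r' r'' poles s this]
  have "\<forall>\<theta>\<in>{0..pi}. r \<theta> = - deriv (deriv r) 0 * cos \<theta> + (r 0 + deriv (deriv r) 0) + C0 *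
      (sin \<theta> powr (2 * n + 2) / (2 * n + 2)
       - cos \<theta> * integral {0..\<theta>} (\<lambda>v. sin v powr (2 * n + 1)))"
    by (simp add: algebra_simps)
  with s show ?thesis
    by blast
qed

end
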